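(* Let $U$ be a one-dimensional quantum walk on $\mathcal H=\bigoplus_{n\in\mathbb Z}\mathcal H_n$. Then $U$ is unitary equivalent to \[ U_{r,\theta}=\sum_{n\in\mathbb Z}|e_1^{n-1}\rangle\langle r_ne_1^n+e^{i\theta_n}s_ne_2^n|+|e_2^{n+1}\rangle\langle -e^{-i\theta_n}s_ne_1^n+r_ne_2^n| \] for some sequences $0\le r_n\le 1$ and $\theta_n\in\mathbb R$ ($n\in\mathbb Z$), where $s_n=\sqrt{1-r_n^2}$ and $\theta_0=\theta_1=0$.
   Context: Let $\mathcal H_n=\mathbb C^2$ for $n\in\mathbb Z$, $\mathcal H=\bigoplus_{n\in\mathbb Z}\mathcal H_n$, $P_n$ the orthogonal projection of $\mathcal H$ onto $\mathcal H_n$, and $\{e_1^n,e_2^n\}$ the standard basis of $\mathcal H_n$. Dirac notation: for $x,y\in\mathcal H$, $|x\rangle\langle y|$ is the rank-one operator $z\mapsto\langle y,z\rangle x$ (inner product conjugate-linear in the first argument). A one-dimensional quantum walk is a unitary operator $U$ on $\mathcal H$ such that $\operatorname{rank}(P_nUP_m)=1$ if $m=n\pm1$ and $\operatorname{rank}(P_nUP_m)=0$ otherwise. Since $U$ and $e^{i\lambda}U$ are identified, two such unitaries $U_1,U_2$ are called unitary equivalent if there exist $\lambda\in\mathbb R$ and a unitary $W=\bigoplus_{n\in\mathbb Z}W_n$ (each $W_n$ a unitary on $\mathcal H_n$) with $e^{i\lambda}WU_1W^*=U_2$. *)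

theory Defs
  imports "HOL-Analysis.Analysis"
begin

text \<open>
Representation. \<open>H = \<Oplus>_{n\<in>\<int>} H_n\<close>, \<open>H_n = \<complex>^2\<close>. A (bounded) operator T on H is
represented by its block matrix: \<open>T n m :: complex^2^2\<close> is the matrix of \<open>P_n T P_m\<close>
(as a map \<open>H_m \<rightarrow> H_n\<close>) w.r.t. the standard bases, i.e.
\<open>(T n m) $ i $ j = \<langle>e_i^n, T e_j^m\<rangle>\<close>.
\<close>

type_synonym blockop = "int \<Rightarrow> int \<Rightarrow> complex^2^2"

definition entry :: "blockop \<Rightarrow> int \<times> 2 \<Rightarrow> int \<times> 2 \<Rightarrow> complex" where
  "entry T a b = T (fst a) (fst b) $ snd a $ snd b"

text \<open>A bounded operator on H is unitary iff its matrix has orthonormal columns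
(\<open>U\<^sup>*U = I\<close>) and orthonormal rows (\<open>UU\<^sup>* = I\<close>); conversely every matrix with
orthonormal columns defines a bounded isometry.\<close>
definition unitary_op :: "blockop \<Rightarrow> bool" where
  "unitary_op U \<longleftrightarrow>
     (\<forall>b c. ((\<lambda>a. cnj (entry U a b) * entry U a c) has_sum (if b = c then 1 else 0)) UNIV) \<and>
     (\<forall>a d. ((\<lambda>b. entry U a b * cnj (entry U d b)) has_sum (if a = d then 1 else 0)) UNIV)"

definition quantum_walk :: "blockop \<Rightarrow> bool" where
  "quantum_walk U \<longleftrightarrow> unitary_op U \<and>
     (\<forall>n m. rank (U n m) = (if m = n + 1 \<or> m = n - 1 then 1 else 0))"

definition adj2 :: "complex^2^2 \<Rightarrow> complex^2^2" where
  "adj2 A = (\<chi> i j. cnj (A $ j $ i))"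

definition unitary2 :: "complex^2^2 \<Rightarrow> bool" where
  "unitary2 A \<longleftrightarrow> adj2 A ** A = mat 1 \<and> A ** adj2 A = mat 1"

text \<open>\<open>e^{i\<lambda>} W U\<^sub>1 W\<^sup>* = U\<^sub>2\<close> with \<open>W = \<Oplus> W_n\<close> block diagonal, written blockwise.\<close>
definition unitary_equiv :: "blockop \<Rightarrow> blockop \<Rightarrow> bool" where
  "unitary_equiv U1 U2 \<longleftrightarrow>
     (\<exists>(lam::real) (W::int \<Rightarrow> complex^2^2). (\<forall>n. unitary2 (W n)) \<and>
        (\<forall>n m. mat (exp (\<i> * complex_of_real lam)) ** W n ** U1 n m ** adj2 (W m) = U2 n m))"

definition e1 :: "complex^2" where "e1 = axis 1 1"
definition e2 :: "complex^2" where "e2 = axis 2 1"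

text \<open>Rank-one operator \<open>|x\<rangle>\<langle>y|\<close> for \<open>x \<in> H_a\<close>, \<open>y \<in> H_b\<close>: \<open>z \<mapsto> \<langle>y,z\<rangle> x\<close>
(inner product conjugate-linear in the first argument).\<close>
definition ketbra :: "int \<Rightarrow> complex^2 \<Rightarrow> int \<Rightarrow> complex^2 \<Rightarrow> blockop" where
  "ketbra a x b y = (\<lambda>n m. if n = a \<and> m = b then (\<chi> i j. x $ i * cnj (y $ j)) else 0)"

definition U_rt :: "(int \<Rightarrow> real) \<Rightarrow> (int \<Rightarrow> real) \<Rightarrow> blockop" where
  "U_rt r \<theta> = (\<lambda>p q. \<Sum>\<^sub>\<infinity>n. (let s = complex_of_real (sqrt (1 - (r n)\<^sup>2)) in
       ketbra (n - 1) e1 n (complex_of_real (r n) *s e1 + (exp (\<i> * complex_of_real (\<theta> n)) * s) *s e2) p q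
     + ketbra (n + 1) e2 n ((- exp (- \<i> * complex_of_real (\<theta> n)) * s) *s e1 + complex_of_real (r n) *s e2) p q))"

end

theory Submission
  imports Defs
begin

(* In column n a quantum walk has only the blocks U(n-1,n) and U(n+1,n), both of rank one, and
   orthonormality of the columns makes the ranges of U(n,n-1) and U(n,n+1) orthogonal. Rotating each
   H_n so that the range of U(n,n+1) becomes span e1, hence that of U(n,n-1) span e2, leaves every
   block with a single nonzero row, and the two rows of column n form a unitary 2x2 matrix M_n.
   It remains to conjugate by diagonal unitaries diag(e^{i phi_n}, e^{i psi_n}) and to multiply by a
   global phase. Asking every gauged M_n to have a nonnegative (1,1) entry and determinant 1 gives
   first-order difference equations for phi and psi on Z, and a unitary of determinant 1 with
   (1,1) entry r >= 0 is the coin [[r, e^{-i theta} s], [-e^{i theta} s, r]]. The two remaining free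
   constants, psi_0 and the global phase, make the (1,2) entries at n = 0 and n = 1 nonnegative,
   i.e. theta_0 = theta_1 = 0. *)

lemma rank_eq_0_iff:
  fixes A :: "'a::field^'n^'m"
  shows "rank A = 0 \<longleftrightarrow> A = 0"
proof -
  have "rank A = 0 \<longleftrightarrow> (\<forall>i. row i A = 0)"
    unfolding row_rank_def_gen by (auto simp: rows_def)
  then show ?thesis
    by (simp add: vec_eq_iff row_def)
qed

lemma det_eq_0_if_rank_less:
  fixes A :: "'a::field^'n^'n"
  assumes "rank A < CARD('n)" shows "det A = 0"
proof (rule ccontr)
  assume "det A \<noteq> 0"
  then obtain B where "B ** A = mat 1"
    using invertible_det_nz unfolding invertible_def by blast
  then have "vec.span (rows A) = UNIV"
    using matrix_left_invertible_span_rows_gen by blast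
  then have "rank A = CARD('n)"
    unfolding row_rank_def_gen by (metis vec.dim_span vec_dim_card)
  with assms show False by simp
qed

lemma matrix_mult_row_eq_0:
  fixes A :: "'a::semiring_1^'n^'m"
  assumes "A $ i = 0" shows "(A ** B) $ i = 0"
  using assms by (simp add: matrix_matrix_mult_def vec_eq_iff)

lemma matrix_add_rdistrib:
  fixes A B :: "'a::semiring_1^'n^'m"
  shows "(A + B) ** C = A ** C + B ** C"
  by (simp add: matrix_matrix_mult_def vec_eq_iff sum.distrib distrib_right)

definition mat2 :: "complex \<Rightarrow> complex \<Rightarrow> complex \<Rightarrow> complex \<Rightarrow> complex^2^2" where
  "mat2 a b c d = (\<chi> i j. if i = 1 then (if j = 1 then a else b) else (if j = 1 then c else d))"

abbreviation diag2 :: "complex \<Rightarrow> complex \<Rightarrow> complex^2^2" where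
  "diag2 a b \<equiv> mat2 a 0 0 b"

lemma mat2_nth [simp]:
  "mat2 a b c d $ 1 $ 1 = a" "mat2 a b c d $ 1 $ 2 = b"
  "mat2 a b c d $ 2 $ 1 = c" "mat2 a b c d $ 2 $ 2 = d"
  by (simp_all add: mat2_def)

lemma mat_nth_2 [simp]:
  "(mat c :: complex^2^2) $ 1 $ 1 = c" "(mat c :: complex^2^2) $ 1 $ 2 = 0"
  "(mat c :: complex^2^2) $ 2 $ 1 = 0" "(mat c :: complex^2^2) $ 2 $ 2 = c"
  by (simp_all add: mat_def)

lemma adj2_nth [simp]: "adj2 A $ i $ j = cnj (A $ j $ i)"
  by (simp add: adj2_def)

lemma matrix_mult_nth_2: "((A::complex^2^2) ** B) $ i $ j = A$i$1 * B$1$j + A$i$2 * B$2$j"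
  by (simp add: matrix_matrix_mult_def sum_2)

lemma mat2_eq_iff:
  "(A::complex^2^2) = B \<longleftrightarrow>
     A$1$1 = B$1$1 \<and> A$1$2 = B$1$2 \<and> A$2$1 = B$2$1 \<and> A$2$2 = B$2$2"
  by (auto simp: vec_eq_iff forall_2)

lemma adj2_mult: "adj2 (A ** B) = adj2 B ** adj2 A"
  by (simp add: mat2_eq_iff matrix_mult_nth_2 mult.commute)

lemma adj2_adj2 [simp]: "adj2 (adj2 A) = A"
  by (simp add: mat2_eq_iff)

lemma det_adj2 [simp]: "det (adj2 A) = cnj (det A)"
  by (simp add: det_2)

lemma mult_cnj_eq_norm_square: "z * cnj z = (complex_of_real (cmod z))\<^sup>2"
  by (metis complex_norm_square of_real_power)

lemma unitary2_mult: "unitary2 A \<Longrightarrow> unitary2 B \<Longrightarrow> unitary2 (A ** B)"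
  unfolding unitary2_def adj2_mult by (metis matrix_mul_assoc matrix_mul_lid)

lemma unitary2_adj2: "unitary2 A \<Longrightarrow> unitary2 (adj2 A)"
  by (simp add: unitary2_def)

lemma unitary2_iff_left_inverse: "unitary2 A \<longleftrightarrow> adj2 A ** A = mat 1"
  using matrix_left_right_inverse unfolding unitary2_def by blast

lemma unitary2_diag2: "cmod a = 1 \<Longrightarrow> cmod b = 1 \<Longrightarrow> unitary2 (diag2 a b)"
  by (simp add: unitary2_def mat2_eq_iff matrix_mult_nth_2 mult_cnj_eq_norm_square mult.commute)

lemma unitary2_mat: "cmod c = 1 \<Longrightarrow> unitary2 (mat c)"
  by (simp add: unitary2_def mat2_eq_iff matrix_mult_nth_2 mult_cnj_eq_norm_square mult.commute)

lemma unitary2_rotation: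
  assumes "(cmod u)\<^sup>2 + (cmod v)\<^sup>2 = 1"
  shows "unitary2 (mat2 (cnj u) (cnj v) (- v) u)"
proof -
  have "u * cnj u + v * cnj v = 1"
    using arg_cong[OF assms, of complex_of_real] by (simp add: mult_cnj_eq_norm_square)
  then show ?thesis
    by (simp add: unitary2_def mat2_eq_iff matrix_mult_nth_2 algebra_simps)
qed

lemma unitary2_row_norm:
  assumes "unitary2 A" shows "(cmod (A$1$1))\<^sup>2 + (cmod (A$1$2))\<^sup>2 = 1"
proof -
  have "A$1$1 * cnj (A$1$1) + A$1$2 * cnj (A$1$2) = 1"
    using assms by (simp add: unitary2_def mat2_eq_iff matrix_mult_nth_2)
  then have "complex_of_real ((cmod (A$1$1))\<^sup>2 + (cmod (A$1$2))\<^sup>2) = 1"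
    by (simp add: mult_cnj_eq_norm_square)
  then show ?thesis using of_real_eq_1_iff by blast
qed

lemma unitary2_det_norm:
  assumes "unitary2 A" shows "cmod (det A) = 1"
proof -
  have "cnj (det A) * det A = 1"
    using arg_cong[OF conjunct1[OF assms[unfolded unitary2_def]], of det]
    by (simp add: det_mul)
  then have "(cmod (det A))\<^sup>2 = 1"
    by (metis complex_norm_square mult.commute of_real_eq_1_iff)
  then show ?thesis using norm_ge_zero[of "det A"] by (auto simp: power2_eq_1_iff)
qed

lemma unitary2_det_1_nth:
  assumes "unitary2 N" "det N = 1"
  shows "N$2$1 = - cnj (N$1$2)" "N$2$2 = cnj (N$1$1)"
proof -
  (* the adjugate of N *)
  define K where "K = mat2 (N$2$2) (- N$1$2) (- N$2$1) (N$1$1)"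
  have "N ** K = mat 1"
    using assms(2) by (simp add: K_def mat2_eq_iff matrix_mult_nth_2 det_2 algebra_simps)
  then have "adj2 N = K"
    using assms(1) unfolding unitary2_def by (metis matrix_mul_assoc matrix_mul_lid matrix_mul_rid)
  then show "N$2$1 = - cnj (N$1$2)" "N$2$2 = cnj (N$1$1)"
    by (simp_all add: K_def mat2_eq_iff)
qed

(* Rows 1 and 2 of coin r theta are the bras <r e1 + e^{i theta} s e2| and <-e^{-i theta} s e1 + r e2|,
   s = sqrt (1 - r^2), of the two summands of U_{r,theta} at site n. *)
definition coin :: "real \<Rightarrow> real \<Rightarrow> complex^2^2" where
  "coin r \<theta> = mat2 r (cis (- \<theta>) * sqrt (1 - r\<^sup>2)) (- cis \<theta> * sqrt (1 - r\<^sup>2)) r"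

lemma unitary2_det_1_eq_coin:
  assumes "unitary2 N" "det N = 1" "N$1$1 = of_real r" "0 \<le> r"
  shows "N = coin r (- Arg (N$1$2))"
proof -
  have "1 - r\<^sup>2 = (cmod (N$1$2))\<^sup>2"
    using unitary2_row_norm[OF assms(1)] assms(3,4) by simp
  then have "sqrt (1 - r\<^sup>2) = cmod (N$1$2)"
    by simp
  then have polar: "cis (Arg (N$1$2)) * sqrt (1 - r\<^sup>2) = N$1$2"
    using rcis_cmod_Arg[of "N$1$2"] by (simp add: rcis_def mult.commute)
  moreover have "cis (- Arg (N$1$2)) * sqrt (1 - r\<^sup>2) = cnj (N$1$2)"
    using arg_cong[OF polar, of cnj] by (simp add: cis_cnj)
  ultimately show ?thesis
    using unitary2_det_1_nth[OF assms(1,2)] assms(3) by (simp add: coin_def mat2_eq_iff)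
qed

lemma int_antidifference_exists:
  fixes g :: "int \<Rightarrow> 'a::ab_group_add"
  shows "\<exists>f. f 0 = c \<and> (\<forall>n. f n = f (n - 1) + g n)"
proof -
  define f where "f n = c + sum g {1..n} - sum g {n<..0}" for n
  have "f n = f (n - 1) + g n" for n
  proof (cases "n \<ge> 1")
    case True
    then have "{1..n} = insert n {1..n - 1}" "{n<..0} = {}" "{n - 1<..0} = {}" by auto
    then show ?thesis by (simp add: f_def algebra_simps)
  next
    case False
    then have "{1..n} = {}" "{1..n - 1} = {}" "{n - 1<..0} = insert n {n<..0}" by auto
    then show ?thesis by (simp add: f_def algebra_simps)
  qed
  moreover have "f 0 = c" by (simp add: f_def)
  ultimately show ?thesis by blast
qed

lemma cis_minus_Arg_mult: "cis (- Arg z) * z = of_real (cmod z)"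
  by (metis rcis_cmod_Arg rcis_def cis_mult add.left_inverse cis_zero mult.left_commute mult_1_right)

lemma gauge_nth:
  fixes M :: "complex^2^2" and l p q p' q' :: real
  defines "N \<equiv> mat (cis l) ** diag2 (cis p) (cis q) ** M ** adj2 (diag2 (cis p') (cis q'))"
  shows "N$1$1 = cis (l + p - p') * M$1$1" "N$1$2 = cis (l + p - q') * M$1$2"
    and "det N = cis (2 * l + p + q - p' - q') * det M"
proof -
  have "cis (l + p - p') = cis l * cis p * cnj (cis p')"
    and "cis (l + p - q') = cis l * cis p * cnj (cis q')"
    and "cis (2 * l + p + q - p' - q')
           = cis l * cis l * cis p * cis q * cnj (cis p') * cnj (cis q')"
    by (simp_all add: cis_cnj cis_mult)
  then show "N$1$1 = cis (l + p - p') * M$1$1" "N$1$2 = cis (l + p - q') * M$1$2"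
    and "det N = cis (2 * l + p + q - p' - q') * det M"
    unfolding N_def by (simp_all add: matrix_mult_nth_2 det_2 algebra_simps)
qed

lemma gauge_phase_equations_solvable:
  fixes \<alpha> \<beta> \<omega> :: "int \<Rightarrow> real"
  obtains l \<phi> \<psi> where
    "\<And>n. l + \<phi> (n - 1) - \<phi> n = - \<alpha> n"
    "\<And>n. 2 * l + \<phi> (n - 1) + \<psi> (n + 1) - \<phi> n - \<psi> n = - \<omega> n"
    "l + \<phi> (- 1) - \<psi> 0 = - \<beta> 0" "l + \<phi> 0 - \<psi> 1 = - \<beta> 1"
proof -
  define l where "l = (\<beta> 0 - \<omega> 0 - \<beta> 1) / 2"
  obtain \<phi> where \<phi>0: "\<phi> 0 = 0" and \<phi>: "\<And>n. \<phi> n = \<phi> (n - 1) + (l + \<alpha> n)"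
    using int_antidifference_exists[of 0 "\<lambda>n. l + \<alpha> n"] by blast
  obtain \<psi> where \<psi>0: "\<psi> 0 = \<beta> 0 - \<alpha> 0"
    and \<psi>: "\<And>n. \<psi> n = \<psi> (n - 1) + (\<alpha> (n - 1) - \<omega> (n - 1) - l)"
    using int_antidifference_exists[of "\<beta> 0 - \<alpha> 0" "\<lambda>n. \<alpha> (n - 1) - \<omega> (n - 1) - l"]
    by blast
  have "l + \<phi> (n - 1) - \<phi> n = - \<alpha> n" for n
    using \<phi>[of n] by simp
  moreover have "2 * l + \<phi> (n - 1) + \<psi> (n + 1) - \<phi> n - \<psi> n = - \<omega> n" for n
    using \<phi>[of n] \<psi>[of "n + 1"] by simp
  moreover have "l + \<phi> (- 1) - \<psi> 0 = - \<beta> 0" "l + \<phi> 0 - \<psi> 1 = - \<beta> 1"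
    using \<phi>[of 0] \<phi>0 \<psi>[of 1] \<psi>0 by (simp_all add: l_def)
  ultimately show ?thesis
    using that by blast
qed

lemma unitary2_sequence_gauge_normal_form:
  fixes M :: "int \<Rightarrow> complex^2^2"
  assumes unitary: "\<And>n. unitary2 (M n)"
  obtains l \<phi> \<psi> r \<theta> where "\<theta> 0 = 0" "\<theta> 1 = 0" "\<And>n. 0 \<le> r n \<and> r n \<le> 1"
    "\<And>n. mat (cis l) ** diag2 (cis (\<phi> (n - 1))) (cis (\<psi> (n + 1))) ** M n
            ** adj2 (diag2 (cis (\<phi> n)) (cis (\<psi> n))) = coin (r n) (\<theta> n)"
proof -
  define a where "a n = M n $ 1 $ 1" for n
  define b where "b n = M n $ 1 $ 2" for n
  obtain l \<phi> \<psi> where \<phi>: "\<And>n. l + \<phi> (n - 1) - \<phi> n = - Arg (a n)"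
    and det: "\<And>n. 2 * l + \<phi> (n - 1) + \<psi> (n + 1) - \<phi> n - \<psi> n = - Arg (det (M n))"
    and b0: "l + \<phi> (- 1) - \<psi> 0 = - Arg (b 0)" and b1: "l + \<phi> 0 - \<psi> 1 = - Arg (b 1)"
    by (rule gauge_phase_equations_solvable) (rule that)
  define N where "N n = mat (cis l) ** diag2 (cis (\<phi> (n - 1))) (cis (\<psi> (n + 1))) ** M n
                         ** adj2 (diag2 (cis (\<phi> n)) (cis (\<psi> n)))" for n
  define r where "r n = cmod (a n)" for n
  define \<theta> where "\<theta> n = - Arg (N n $ 1 $ 2)" for n
  have N_unitary: "unitary2 (N n)" for n
    unfolding N_def
    by (intro unitary2_mult unitary2_adj2 unitary2_diag2 unitary2_mat unitary) simp_all
  have N11: "N n $ 1 $ 1 = of_real (r n)" for n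
    using gauge_nth(1)[of l "\<phi> (n - 1)" "\<psi> (n + 1)" "M n" "\<phi> n" "\<psi> n"]
    by (simp add: N_def r_def a_def \<phi>[unfolded a_def] cis_minus_Arg_mult)
  have N_det: "det (N n) = 1" for n
    using gauge_nth(3)[of l "\<phi> (n - 1)" "\<psi> (n + 1)" "M n" "\<phi> n" "\<psi> n"]
      unitary2_det_norm[OF unitary]
    by (simp add: N_def det cis_minus_Arg_mult)
  have "N 0 $ 1 $ 2 = of_real (cmod (b 0))" "N 1 $ 1 $ 2 = of_real (cmod (b 1))"
    using gauge_nth(2)[of l "\<phi> (- 1)" "\<psi> 1" "M 0" "\<phi> 0" "\<psi> 0"]
      gauge_nth(2)[of l "\<phi> 0" "\<psi> 2" "M 1" "\<phi> 1" "\<psi> 1"]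
    by (simp_all add: N_def b_def b0[unfolded b_def] b1[unfolded b_def] cis_minus_Arg_mult)
  then have "\<theta> 0 = 0" "\<theta> 1 = 0"
    by (simp_all add: \<theta>_def)
  moreover have "0 \<le> r n \<and> r n \<le> 1" for n
  proof -
    have "(r n)\<^sup>2 \<le> 1"
      using unitary2_row_norm[OF unitary, of n] zero_le_power2[of "cmod (b n)"]
      unfolding r_def a_def b_def by linarith
    then show ?thesis by (simp add: r_def abs_square_le_1)
  qed
  moreover have "N n = coin (r n) (\<theta> n)" for n
    unfolding \<theta>_def using unitary2_det_1_eq_coin[OF N_unitary N_det N11] by (simp add: r_def)
  ultimately show ?thesis
    using that unfolding N_def by blast
qed

lemma unitary2_separating_ranges:
  fixes X Y :: "complex^2^2"
  assumes "X \<noteq> 0" "det X = 0" "adj2 Y ** X = 0"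
  obtains W where "unitary2 W" "(W ** X) $ 2 = 0" "(W ** Y) $ 1 = 0"
proof -
  (* (u, v) normalises a nonzero column of X, which spans the range of X since det X = 0 *)
  obtain l where l: "X$1$l \<noteq> 0 \<or> X$2$l \<noteq> 0"
    using assms(1) unfolding mat2_eq_iff by auto
  define c where "c = sqrt ((cmod (X$1$l))\<^sup>2 + (cmod (X$2$l))\<^sup>2)"
  define u where "u = X$1$l / c"
  define v where "v = X$2$l / c"
  have "(cmod (X$1$l))\<^sup>2 + (cmod (X$2$l))\<^sup>2 > 0"
    using l by (auto simp: add_pos_nonneg add_nonneg_pos)
  then have "c > 0" and c2: "c\<^sup>2 = (cmod (X$1$l))\<^sup>2 + (cmod (X$2$l))\<^sup>2"
    unfolding c_def by simp_all
  have "(cmod u)\<^sup>2 + (cmod v)\<^sup>2 = ((cmod (X$1$l))\<^sup>2 + (cmod (X$2$l))\<^sup>2) / c\<^sup>2"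
    using \<open>c > 0\<close> by (simp add: u_def v_def norm_divide power_divide add_divide_distrib)
  then have "(cmod u)\<^sup>2 + (cmod v)\<^sup>2 = 1"
    using \<open>c > 0\<close> c2 l by simp
  then have W: "unitary2 (mat2 (cnj u) (cnj v) (- v) u)"
    by (rule unitary2_rotation)
  have "X$1$l * X$2$j - X$2$l * X$1$j = 0" for j
    using assms(2) exhaust_2[of l] exhaust_2[of j] by (auto simp: det_2 algebra_simps)
  then have "(mat2 (cnj u) (cnj v) (- v) u ** X) $ 2 = 0"
    by (simp add: vec_eq_iff matrix_mult_nth_2 u_def v_def field_simps)
  moreover have "(mat2 (cnj u) (cnj v) (- v) u ** Y) $ 1 = 0"
  proof -
    have "cnj ((adj2 Y ** X) $ j $ l) = 0" for j
      using assms(3) by simp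
    then show ?thesis
      by (simp add: vec_eq_iff matrix_mult_nth_2 u_def v_def add_divide_distrib[symmetric] mult.commute)
  qed
  ultimately show ?thesis
    using W that by blast
qed

lemma adj2_mult_conj_unitary:
  assumes "unitary2 V"
  shows "adj2 (V ** X ** adj2 W) ** (V ** X ** adj2 W) = W ** (adj2 X ** X) ** adj2 W"
proof -
  have "adj2 (V ** X ** adj2 W) ** (V ** X ** adj2 W) = W ** adj2 X ** (adj2 V ** V) ** X ** adj2 W"
    by (simp add: adj2_mult matrix_mul_assoc)
  also have "\<dots> = W ** (adj2 X ** X) ** adj2 W"
    using assms by (simp add: unitary2_def matrix_mul_assoc)
  finally show ?thesis .
qed

lemma disjoint_rows_sum:
  fixes A B :: "complex^2^2"
  assumes "A $ 2 = 0" "B $ 1 = 0"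
  shows "adj2 (A + B) ** (A + B) = adj2 A ** A + adj2 B ** B"
    and "diag2 1 0 ** (A + B) = A" "diag2 0 1 ** (A + B) = B"
  using assms by (simp_all add: mat2_eq_iff matrix_mult_nth_2 vec_eq_iff forall_2)

lemma quantum_walk_block_eq_0:
  assumes "quantum_walk U" "q \<noteq> p + 1" "q \<noteq> p - 1"
  shows "U p q = 0"
  using assms rank_eq_0_iff unfolding quantum_walk_def by metis

lemma quantum_walk_columns_orthonormal:
  assumes "quantum_walk U"
  shows "adj2 (U (n - 1) n) ** U (n - 1) m + adj2 (U (n + 1) n) ** U (n + 1) m
           = (if m = n then mat 1 else 0)"
proof -
  have "(adj2 (U (n - 1) n) ** U (n - 1) m + adj2 (U (n + 1) n) ** U (n + 1) m) $ j $ k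
          = (if (n, j) = (m, k) then 1 else 0)" for j k
  proof -
    define f where "f a = cnj (entry U a (n, j)) * entry U a (m, k)" for a
    define S where "S = {n - 1, n + 1} \<times> (UNIV :: 2 set)"
    have "(f has_sum (if (n, j) = (m, k) then 1 else 0)) UNIV"
      using assms unfolding quantum_walk_def unitary_op_def f_def by blast
    moreover have "f a = 0" if "a \<notin> S" for a
    proof -
      have "U (fst a) n = 0"
        using that by (intro quantum_walk_block_eq_0[OF assms]) (auto simp: S_def mem_Times_iff)
      then show ?thesis by (simp add: f_def entry_def)
    qed
    ultimately have "(f has_sum (if (n, j) = (m, k) then 1 else 0)) S"
      using has_sum_cong_neutral[of S UNIV f f] by auto
    moreover have "(f has_sum sum f S) S"
      by (simp add: S_def)
    ultimately have "sum f S = (if (n, j) = (m, k) then 1 else 0)"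
      using has_sum_unique by blast
    moreover have "sum f S = (\<Sum>p\<in>{n - 1, n + 1}. \<Sum>i\<in>UNIV. f (p, i))"
      unfolding S_def by (simp add: sum.cartesian_product split_def)
    ultimately show ?thesis
      by (simp add: f_def entry_def matrix_matrix_mult_def)
  qed
  then show ?thesis
    by (auto simp: vec_eq_iff mat_def)
qed

lemma quantum_walk_column_unit:
  assumes "quantum_walk U"
  shows "adj2 (U (n - 1) n) ** U (n - 1) n + adj2 (U (n + 1) n) ** U (n + 1) n = mat 1"
  using quantum_walk_columns_orthonormal[OF assms, of n n] by simp

lemma quantum_walk_ranges_orthogonal:
  assumes "quantum_walk U"
  shows "adj2 (U n (n - 1)) ** U n (n + 1) = 0"
proof -
  have "U (n - 2) (n + 1) = 0"
    by (rule quantum_walk_block_eq_0[OF assms]) auto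
  then show ?thesis
    using quantum_walk_columns_orthonormal[OF assms, of "n - 1" "n + 1"] by simp
qed

lemma quantum_walk_separating_unitary:
  assumes qw: "quantum_walk U"
  obtains V where "unitary2 V" "(V ** U n (n + 1)) $ 2 = 0" "(V ** U n (n - 1)) $ 1 = 0"
proof -
  have "rank (U n (n + 1)) = 1"
    using qw by (simp add: quantum_walk_def)
  then have "U n (n + 1) \<noteq> 0" "det (U n (n + 1)) = 0"
    using rank_eq_0_iff[of "U n (n + 1)"] det_eq_0_if_rank_less[of "U n (n + 1)"] by simp_all
  then show ?thesis
    using unitary2_separating_ranges quantum_walk_ranges_orthogonal[OF qw] that by blast
qed

lemma quantum_walk_gauge_to_rows:
  assumes qw: "quantum_walk U"
  obtains W M where "\<And>n. unitary2 (W n)" "\<And>n. unitary2 (M n)"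
    "\<And>n. W (n - 1) ** U (n - 1) n ** adj2 (W n) = diag2 1 0 ** M n"
    "\<And>n. W (n + 1) ** U (n + 1) n ** adj2 (W n) = diag2 0 1 ** M n"
proof -
  have "\<forall>n. \<exists>V. unitary2 V \<and> (V ** U n (n + 1)) $ 2 = 0 \<and> (V ** U n (n - 1)) $ 1 = 0"
    by (metis quantum_walk_separating_unitary[OF qw])
  then obtain W where W: "\<And>n. unitary2 (W n)"
    and upper: "\<And>n. (W n ** U n (n + 1)) $ 2 = 0" and lower: "\<And>n. (W n ** U n (n - 1)) $ 1 = 0"
    by (auto dest!: choice)
  define A where "A n = W (n - 1) ** U (n - 1) n ** adj2 (W n)" for n
  define B where "B n = W (n + 1) ** U (n + 1) n ** adj2 (W n)" for n
  have A2: "A n $ 2 = 0" for n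
    using upper[of "n - 1"] by (simp add: A_def matrix_mult_row_eq_0)
  have B1: "B n $ 1 = 0" for n
    using lower[of "n + 1"] by (simp add: B_def matrix_mult_row_eq_0)
  have "unitary2 (A n + B n)" for n
  proof -
    have "adj2 (A n + B n) ** (A n + B n) = adj2 (A n) ** A n + adj2 (B n) ** B n"
      by (rule disjoint_rows_sum(1)[OF A2 B1])
    also have "\<dots> = W n ** (adj2 (U (n - 1) n) ** U (n - 1) n + adj2 (U (n + 1) n) ** U (n + 1) n)
                        ** adj2 (W n)"
      unfolding A_def B_def adj2_mult_conj_unitary[OF W]
      by (simp add: matrix_add_ldistrib matrix_add_rdistrib)
    also have "\<dots> = mat 1"
      using W[of n] by (simp add: quantum_walk_column_unit[OF qw] unitary2_def)
    finally show ?thesis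
      by (simp add: unitary2_iff_left_inverse)
  qed
  moreover have "diag2 1 0 ** (A n + B n) = A n" "diag2 0 1 ** (A n + B n) = B n" for n
    using disjoint_rows_sum(2,3)[OF A2 B1] .
  ultimately show ?thesis
    using that[of W "\<lambda>n. A n + B n"] W unfolding A_def B_def by simp
qed

lemma U_rt_block:
  "U_rt r \<theta> p q =
     (if p = q - 1 then diag2 1 0 ** coin (r q) (\<theta> q)
      else if p = q + 1 then diag2 0 1 ** coin (r q) (\<theta> q) else 0)"
  unfolding U_rt_def
  by (subst infsum_cong_neutral[where T = "{q}"])
    (auto simp: Let_def ketbra_def coin_def e1_def e2_def axis_def mat2_eq_iff matrix_mult_nth_2
      cis_conv_exp exp_cnj)

lemma gauge_conj_row_block:
  fixes X Y Z M D :: "complex^2^2"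
  shows "Y ** X ** adj2 Z = diag2 1 0 ** M \<Longrightarrow>
           mat c ** (diag2 a b ** Y) ** X ** adj2 (D ** Z)
             = diag2 1 0 ** (mat c ** diag2 a b' ** M ** adj2 D)"
    and "Y ** X ** adj2 Z = diag2 0 1 ** M \<Longrightarrow>
           mat c ** (diag2 a b ** Y) ** X ** adj2 (D ** Z)
             = diag2 0 1 ** (mat c ** diag2 a' b ** M ** adj2 D)"
proof -
  have conj: "mat c ** (diag2 a b ** Y) ** X ** adj2 (D ** Z)
                = mat c ** diag2 a b ** (Y ** X ** adj2 Z) ** adj2 D"
    by (simp add: adj2_mult matrix_mul_assoc)
  show "Y ** X ** adj2 Z = diag2 1 0 ** M \<Longrightarrow>
          mat c ** (diag2 a b ** Y) ** X ** adj2 (D ** Z)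
            = diag2 1 0 ** (mat c ** diag2 a b' ** M ** adj2 D)"
    and "Y ** X ** adj2 Z = diag2 0 1 ** M \<Longrightarrow>
          mat c ** (diag2 a b ** Y) ** X ** adj2 (D ** Z)
            = diag2 0 1 ** (mat c ** diag2 a' b ** M ** adj2 D)"
    unfolding conj by (simp_all add: mat2_eq_iff matrix_mult_nth_2)
qed

lemma unitary_equiv_U_rt_blockwise:
  assumes "quantum_walk U" and "\<And>n. unitary2 (V n)"
    and upper: "\<And>n. mat (cis l) ** V (n - 1) ** U (n - 1) n ** adj2 (V n)
                          = diag2 1 0 ** coin (r n) (\<theta> n)"
    and lower: "\<And>n. mat (cis l) ** V (n + 1) ** U (n + 1) n ** adj2 (V n)
                          = diag2 0 1 ** coin (r n) (\<theta> n)"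
  shows "unitary_equiv U (U_rt r \<theta>)"
proof -
  have "mat (cis l) ** V p ** U p q ** adj2 (V q) = U_rt r \<theta> p q" for p q
  proof -
    consider "p = q - 1" | "p = q + 1" | "p \<noteq> q - 1" "p \<noteq> q + 1"
      by blast
    then show ?thesis
    proof cases
      case 1
      then show ?thesis using upper[of q] by (simp add: U_rt_block)
    next
      case 2
      then show ?thesis using lower[of q] by (simp add: U_rt_block)
    next
      case 3
      then show ?thesis using quantum_walk_block_eq_0[OF assms(1), of q p] by (simp add: U_rt_block)
    qed
  qed
  then show ?thesis
    unfolding unitary_equiv_def cis_conv_exp[symmetric] using assms(2) by blast
qed

theorem theorem2p4:
  fixes U :: blockop
  assumes "quantum_walk U"
  shows "\<exists>(r::int \<Rightarrow> real) (\<theta>::int \<Rightarrow> real).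
           (\<forall>n. 0 \<le> r n \<and> r n \<le> 1) \<and> \<theta> 0 = 0 \<and> \<theta> 1 = 0 \<and>
           unitary_equiv U (U_rt r \<theta>)"
proof -
  obtain W M where W: "\<And>n. unitary2 (W n)" and M: "\<And>n. unitary2 (M n)"
    and upper: "\<And>n. W (n - 1) ** U (n - 1) n ** adj2 (W n) = diag2 1 0 ** M n"
    and lower: "\<And>n. W (n + 1) ** U (n + 1) n ** adj2 (W n) = diag2 0 1 ** M n"
    by (rule quantum_walk_gauge_to_rows[OF assms]) (rule that)
  obtain l \<phi> \<psi> r \<theta>
    where \<theta>: "\<theta> 0 = 0" "\<theta> 1 = 0" and r: "\<And>n. 0 \<le> r n \<and> r n \<le> 1"
    and gauged: "\<And>n. mat (cis l) ** diag2 (cis (\<phi> (n - 1))) (cis (\<psi> (n + 1))) ** M n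
                       ** adj2 (diag2 (cis (\<phi> n)) (cis (\<psi> n))) = coin (r n) (\<theta> n)"
    by (rule unitary2_sequence_gauge_normal_form[OF M]) (rule that)
  define V where "V n = diag2 (cis (\<phi> n)) (cis (\<psi> n)) ** W n" for n
  have "unitary2 (V n)" for n
    unfolding V_def by (intro unitary2_mult unitary2_diag2 W) simp_all
  moreover have "mat (cis l) ** V (n - 1) ** U (n - 1) n ** adj2 (V n)
                   = diag2 1 0 ** coin (r n) (\<theta> n)" for n
    unfolding V_def gauged[symmetric] by (rule gauge_conj_row_block(1)[OF upper])
  moreover have "mat (cis l) ** V (n + 1) ** U (n + 1) n ** adj2 (V n)
                   = diag2 0 1 ** coin (r n) (\<theta> n)" for n
    unfolding V_def gauged[symmetric] by (rule gauge_conj_row_block(2)[OF lower])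
  ultimately have "unitary_equiv U (U_rt r \<theta>)"
    by (rule unitary_equiv_U_rt_blockwise[OF assms])
  then show ?thesis
    using \<theta> r by blast
qed

end
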